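(* Let $A$ be a non-empty set, $I$ a non-empty index set, $\{V_i\}_{i\in I}\subseteq\mathcal R(A)$, ${\cal A}=(A,I,V_i)$, and let $E,F$ be fuzzy equivalences on $A$ with $E\le F$. Then the fuzzy relation $F/E$ on $A/E$ given by $F/E(E_{a_1},E_{a_2})=F(a_1,a_2)$ for all $a_1,a_2\in A$ is a well-defined fuzzy equivalence on $A/E$, and the quotient fuzzy relational systems $({\cal A}/E)/(F/E)$ and ${\cal A}/F$ are isomorphic.
   Context: $\mathcal L=(L,\wedge,\vee,\otimes,\to,0,1)$ is a complete residuated lattice. For a non-empty set $X$, $\mathcal R(X)$ is the set of fuzzy relations $X\times X\to L$, ordered pointwise; $(R\circ S)(x,z)=\bigvee_{y}R(x,y)\otimes S(y,z)$. A fuzzy equivalence $E$ on $X$ is reflexive ($E(x,x)=1$), symmetric and transitive ($E(x,y)\otimes E(y,z)\le E(x,z)$). $E_x(y)=E(x,y)$ and $X/E=\{E_x:x\in X\}$. A fuzzy relational system is ${\cal X}=(X,I,V_i)$ with $\{V_i\}_{i\in I}\subseteq\mathcal R(X)$; its quotient with respect to a fuzzy equivalence $E$ is ${\cal X}/E=(X/E,I,V_i^{X/E})$ where $V_i^{X/E}(E_{x_1},E_{x_2})=(E\circ V_i\circ E)(x_1,x_2)$ (well defined). Two systems $(X,I,V_i)$, $(Y,I,W_i)$ are isomorphic if there is a bijection $\varphi:X\to Y$ with $V_i(x_1,x_2)=W_i(\varphi(x_1),\varphi(x_2))$ for all $x_1,x_2\in X$, $i\in I$. *)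

theory Defs
  imports Main
begin

text \<open>Complete residuated lattice: the carrier is a type of class complete_lattice
 (so 0 = bot, 1 = top, meet/join = inf/sup); tens is the monoid operation and res the residuum.\<close>

definition complete_residuated_lattice ::
  "('l::complete_lattice \<Rightarrow> 'l \<Rightarrow> 'l) \<Rightarrow> ('l \<Rightarrow> 'l \<Rightarrow> 'l) \<Rightarrow> bool" where
  "complete_residuated_lattice tens res \<longleftrightarrow>
     (\<forall>a b c. tens (tens a b) c = tens a (tens b c)) \<and>
     (\<forall>a b. tens a b = tens b a) \<and>
     (\<forall>a. tens a top = a) \<and>
     (\<forall>a b c. tens a b \<le> c \<longleftrightarrow> a \<le> res b c)"

definition rcomp :: "('l::complete_lattice \<Rightarrow> 'l \<Rightarrow> 'l) \<Rightarrow> 'a set \<Rightarrow>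
    ('a \<Rightarrow> 'a \<Rightarrow> 'l) \<Rightarrow> ('a \<Rightarrow> 'a \<Rightarrow> 'l) \<Rightarrow> 'a \<Rightarrow> 'a \<Rightarrow> 'l" where
  "rcomp tens X R S x z = (SUP y\<in>X. tens (R x y) (S y z))"

definition fuzzy_equivalence :: "('l::complete_lattice \<Rightarrow> 'l \<Rightarrow> 'l) \<Rightarrow> 'a set \<Rightarrow>
    ('a \<Rightarrow> 'a \<Rightarrow> 'l) \<Rightarrow> bool" where
  "fuzzy_equivalence tens X E \<longleftrightarrow>
     (\<forall>x\<in>X. E x x = top) \<and>
     (\<forall>x\<in>X. \<forall>y\<in>X. E x y = E y x) \<and>
     (\<forall>x\<in>X. \<forall>y\<in>X. \<forall>z\<in>X. tens (E x y) (E y z) \<le> E x z)"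

definition fclass :: "'a set \<Rightarrow> ('a \<Rightarrow> 'a \<Rightarrow> 'l::complete_lattice) \<Rightarrow> 'a \<Rightarrow> ('a \<Rightarrow> 'l)" where
  "fclass X E x = (\<lambda>y. if y \<in> X then E x y else bot)"

definition fquot :: "'a set \<Rightarrow> ('a \<Rightarrow> 'a \<Rightarrow> 'l::complete_lattice) \<Rightarrow> ('a \<Rightarrow> 'l) set" where
  "fquot X E = fclass X E ` X"

definition frep :: "'a set \<Rightarrow> ('a \<Rightarrow> 'a \<Rightarrow> 'l::complete_lattice) \<Rightarrow> ('a \<Rightarrow> 'l) \<Rightarrow> 'a" where
  "frep X E C = (SOME x. x \<in> X \<and> fclass X E x = C)"

text \<open>Quotient relation V^{X/E}(E_x1, E_x2) = (E o V o E)(x1, x2).\<close>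
definition qrel :: "('l::complete_lattice \<Rightarrow> 'l \<Rightarrow> 'l) \<Rightarrow> 'a set \<Rightarrow> ('a \<Rightarrow> 'a \<Rightarrow> 'l) \<Rightarrow>
    ('a \<Rightarrow> 'a \<Rightarrow> 'l) \<Rightarrow> ('a \<Rightarrow> 'l) \<Rightarrow> ('a \<Rightarrow> 'l) \<Rightarrow> 'l" where
  "qrel tens X E V C1 C2 = rcomp tens X (rcomp tens X E V) E (frep X E C1) (frep X E C2)"

definition frel_quot :: "'a set \<Rightarrow> ('a \<Rightarrow> 'a \<Rightarrow> 'l::complete_lattice) \<Rightarrow> ('a \<Rightarrow> 'a \<Rightarrow> 'l) \<Rightarrow>
    ('a \<Rightarrow> 'l) \<Rightarrow> ('a \<Rightarrow> 'l) \<Rightarrow> 'l" where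
  "frel_quot X E F C1 C2 = F (frep X E C1) (frep X E C2)"

definition frs_iso :: "'a set \<Rightarrow> 'i set \<Rightarrow> ('i \<Rightarrow> 'a \<Rightarrow> 'a \<Rightarrow> 'l) \<Rightarrow>
    'b set \<Rightarrow> ('i \<Rightarrow> 'b \<Rightarrow> 'b \<Rightarrow> 'l) \<Rightarrow> bool" where
  "frs_iso X I V Y W \<longleftrightarrow> (\<exists>\<phi>. bij_betw \<phi> X Y \<and>
     (\<forall>i\<in>I. \<forall>x1\<in>X. \<forall>x2\<in>X. V i x1 x2 = W i (\<phi> x1) (\<phi> x2)))"

end

theory Submission
  imports Defs
begin

text \<open>Every class of the double quotient (A/E)/(F/E) is the image of some a \<in> A, and two
  elements a1, a2 give the same double class iff F a1 a2 = 1, i.e. iff they give the same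
  F-class. So the double class of a can be mapped to the F-class of a, which is a bijection.
  By well-definedness, all quotient relations can be computed on representatives, and the
  relations then agree because F \<circ> (E \<circ> V \<circ> E) \<circ> F = F \<circ> V \<circ> F: associativity of
  composition together with F \<circ> E = E \<circ> F = F, which holds since E \<le> F.\<close>

lemma rcomp_cong:
  assumes "\<forall>u\<in>X. R x u = R' x' u" "\<forall>u\<in>X. S u z = S' u z'"
  shows "rcomp tens X R S x z = rcomp tens X R' S' x' z'"
  using assms unfolding rcomp_def by (auto intro!: SUP_cong)

lemma fuzzy_equivalenceD:
  assumes "fuzzy_equivalence tens X E" "x \<in> X" "y \<in> X" "z \<in> X"
  shows fuzzy_equivalence_refl: "E x x = top"
    and fuzzy_equivalence_sym: "E x y = E y x"
    and fuzzy_equivalence_trans: "tens (E x y) (E y z) \<le> E x z"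
  using assms unfolding fuzzy_equivalence_def by blast+

lemma fclass_fquot_in: "a \<in> A \<Longrightarrow> fclass A E a \<in> fquot A E"
  unfolding fquot_def by blast

lemma rcomp_fquot:
  assumes "x \<in> X" "z \<in> X"
    and "\<forall>b\<in>X. \<forall>c\<in>X. R (fclass X E b) (fclass X E c) = R' b c"
    and "\<forall>b\<in>X. \<forall>c\<in>X. S (fclass X E b) (fclass X E c) = S' b c"
  shows "rcomp tens (fquot X E) R S (fclass X E x) (fclass X E z) = rcomp tens X R' S' x z"
  unfolding rcomp_def fquot_def image_image using assms by (auto intro!: SUP_cong)

lemma frs_iso_image:
  assumes "\<forall>a1\<in>A. \<forall>a2\<in>A. p a1 = p a2 \<longleftrightarrow> q a1 = q a2"
    and "\<forall>i\<in>I. \<forall>a1\<in>A. \<forall>a2\<in>A. V i (p a1) (p a2) = W i (q a1) (q a2)"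
  shows "frs_iso (p ` A) I V (q ` A) W"
proof -
  define \<phi> where "\<phi> x = q (inv_into A p x)" for x
  have \<phi>: "\<phi> (p a) = q a" if "a \<in> A" for a
    using assms(1) that inv_into_into[of "p a" p A] f_inv_into_f[of "p a" p A]
    unfolding \<phi>_def by auto
  have "bij_betw \<phi> (p ` A) (q ` A)"
    by (rule bij_betwI') (use assms(1) \<phi> in auto)
  then show ?thesis
    unfolding frs_iso_def using assms(2) \<phi> by auto
qed

locale residuated_lattice_ops =
  fixes tens res :: "'l::complete_lattice \<Rightarrow> 'l \<Rightarrow> 'l"
  assumes crl: "complete_residuated_lattice tens res"
begin

lemma tens_assoc: "tens (tens a b) c = tens a (tens b c)"
  using crl unfolding complete_residuated_lattice_def by blast

lemma tens_commute: "tens a b = tens b a"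
  using crl unfolding complete_residuated_lattice_def by blast

lemma tens_top_right [simp]: "tens a top = a"
  using crl unfolding complete_residuated_lattice_def by blast

lemma tens_top_left [simp]: "tens top a = a"
  using tens_commute tens_top_right by metis

lemma tens_le_res_iff: "tens a b \<le> c \<longleftrightarrow> a \<le> res b c"
  using crl unfolding complete_residuated_lattice_def by blast

lemma tens_mono: "a \<le> b \<Longrightarrow> c \<le> d \<Longrightarrow> tens a c \<le> tens b d"
proof -
  have mono_left: "tens a c \<le> tens b c" if "a \<le> b" for a b c
    using that order_trans tens_le_res_iff by blast
  assume "a \<le> b" "c \<le> d"
  then show ?thesis
    using mono_left[of a b c] mono_left[of c d b] tens_commute order_trans by metis
qed

lemma tens_SUP_left: "tens (SUP x\<in>S. f x) c = (SUP x\<in>S. tens (f x) c)"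
proof (rule antisym)
  show "tens (SUP x\<in>S. f x) c \<le> (SUP x\<in>S. tens (f x) c)"
    unfolding tens_le_res_iff
    by (rule SUP_least, rule iffD1[OF tens_le_res_iff], rule SUP_upper)
  show "(SUP x\<in>S. tens (f x) c) \<le> tens (SUP x\<in>S. f x) c"
    by (rule SUP_least) (simp add: tens_mono SUP_upper)
qed

lemma tens_SUP_right: "tens c (SUP x\<in>S. f x) = (SUP x\<in>S. tens c (f x))"
  by (simp add: tens_commute[of c] tens_SUP_left)

lemma rcomp_assoc:
  "rcomp tens X (rcomp tens X R S) T x w = rcomp tens X R (rcomp tens X S T) x w"
proof -
  have "rcomp tens X (rcomp tens X R S) T x w
      = (SUP z\<in>X. SUP y\<in>X. tens (R x y) (tens (S y z) (T z w)))"
    unfolding rcomp_def by (simp add: tens_SUP_left tens_assoc)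
  also have "\<dots> = (SUP y\<in>X. SUP z\<in>X. tens (R x y) (tens (S y z) (T z w)))"
    by (rule SUP_commute)
  also have "\<dots> = rcomp tens X R (rcomp tens X S T) x w"
    unfolding rcomp_def by (simp add: tens_SUP_right)
  finally show ?thesis .
qed

lemma rcomp_absorb_left:
  assumes "fuzzy_equivalence tens A E" "fuzzy_equivalence tens A F"
    and "\<forall>x\<in>A. \<forall>y\<in>A. E x y \<le> F x y" "x \<in> A" "z \<in> A"
  shows "rcomp tens A E F x z = F x z"
  unfolding rcomp_def
proof (rule antisym)
  show "(SUP y\<in>A. tens (E x y) (F y z)) \<le> F x z"
  proof (rule SUP_least)
    fix y assume "y \<in> A"
    then have "tens (E x y) (F y z) \<le> tens (F x y) (F y z)"
      using assms(3,4) by (simp add: tens_mono)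
    also have "\<dots> \<le> F x z"
      by (rule fuzzy_equivalence_trans[OF assms(2,4) \<open>y \<in> A\<close> assms(5)])
    finally show "tens (E x y) (F y z) \<le> F x z" .
  qed
  have "tens (E x x) (F x z) \<le> (SUP y\<in>A. tens (E x y) (F y z))"
    using assms(4) by (rule SUP_upper)
  then show "F x z \<le> (SUP y\<in>A. tens (E x y) (F y z))"
    using fuzzy_equivalence_refl[OF assms(1,4,4,4)] by simp
qed

lemma rcomp_absorb_right:
  assumes "fuzzy_equivalence tens A E" "fuzzy_equivalence tens A F"
    and "\<forall>x\<in>A. \<forall>y\<in>A. E x y \<le> F x y" "x \<in> A" "z \<in> A"
  shows "rcomp tens A F E x z = F x z"
proof -
  have "rcomp tens A F E x z = rcomp tens A E F z x"
    unfolding rcomp_def using assms(1,2,4,5)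
    by (auto intro!: SUP_cong simp: tens_commute fuzzy_equivalence_sym)
  also have "\<dots> = F x z"
    using rcomp_absorb_left[OF assms(1-3,5,4)] fuzzy_equivalence_sym[OF assms(2,4,5,5)] by simp
  finally show ?thesis .
qed

lemma rcomp_sandwich_absorb:
  assumes E: "fuzzy_equivalence tens A E" and F: "fuzzy_equivalence tens A F"
    and le: "\<forall>x\<in>A. \<forall>y\<in>A. E x y \<le> F x y" and "x \<in> A" "z \<in> A"
  shows "rcomp tens A (rcomp tens A F (rcomp tens A (rcomp tens A E V) E)) F x z
       = rcomp tens A (rcomp tens A F V) F x z"
proof -
  let ?EV = "rcomp tens A E V"
  have inner: "rcomp tens A (rcomp tens A ?EV E) F u w = rcomp tens A E (rcomp tens A V F) u w"
    if "u \<in> A" "w \<in> A" for u w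
  proof -
    have "rcomp tens A (rcomp tens A ?EV E) F u w = rcomp tens A ?EV (rcomp tens A E F) u w"
      by (rule rcomp_assoc)
    also have "\<dots> = rcomp tens A ?EV F u w"
      by (rule rcomp_cong) (simp_all add: rcomp_absorb_left[OF E F le] that)
    also have "\<dots> = rcomp tens A E (rcomp tens A V F) u w"
      by (rule rcomp_assoc)
    finally show ?thesis .
  qed
  have "rcomp tens A (rcomp tens A F (rcomp tens A ?EV E)) F x z
      = rcomp tens A F (rcomp tens A (rcomp tens A ?EV E) F) x z"
    by (rule rcomp_assoc)
  also have "\<dots> = rcomp tens A F (rcomp tens A E (rcomp tens A V F)) x z"
    by (rule rcomp_cong) (simp_all add: inner \<open>z \<in> A\<close>)
  also have "\<dots> = rcomp tens A (rcomp tens A F E) (rcomp tens A V F) x z"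
    by (rule rcomp_assoc[symmetric])
  also have "\<dots> = rcomp tens A F (rcomp tens A V F) x z"
    by (rule rcomp_cong) (simp_all add: rcomp_absorb_right[OF E F le] \<open>x \<in> A\<close>)
  also have "\<dots> = rcomp tens A (rcomp tens A F V) F x z"
    by (rule rcomp_assoc[symmetric])
  finally show ?thesis .
qed

lemma fuzzy_equivalence_top_left:
  assumes "fuzzy_equivalence tens X E" "x \<in> X" "y \<in> X" "E x y = top" "v \<in> X"
  shows "E x v = E y v"
proof -
  have "E y x = top" using assms fuzzy_equivalence_sym by metis
  moreover have "tens (E y x) (E x v) \<le> E y v" "tens (E x y) (E y v) \<le> E x v"
    using assms fuzzy_equivalence_trans by metis+
  ultimately show ?thesis using assms(4) by (simp add: antisym)
qed

lemma fuzzy_equivalence_top_right: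
  assumes "fuzzy_equivalence tens X E" "x \<in> X" "y \<in> X" "E x y = top" "v \<in> X"
  shows "E v x = E v y"
  using fuzzy_equivalence_top_left[OF assms] fuzzy_equivalence_sym assms by metis

lemma fclass_eq_iff:
  assumes "fuzzy_equivalence tens X E" "x \<in> X" "y \<in> X"
  shows "fclass X E x = fclass X E y \<longleftrightarrow> E x y = top"
proof
  assume "fclass X E x = fclass X E y"
  then have "fclass X E x y = fclass X E y y" by simp
  then show "E x y = top"
    using assms fuzzy_equivalence_refl unfolding fclass_def by metis
next
  assume "E x y = top"
  then show "fclass X E x = fclass X E y"
    unfolding fclass_def using fuzzy_equivalence_top_left[OF assms] by auto
qed

lemma frep_fclass:
  assumes "fuzzy_equivalence tens X E" "x \<in> X"
  shows "frep X E (fclass X E x) \<in> X" "E (frep X E (fclass X E x)) x = top"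
proof -
  have "frep X E (fclass X E x) \<in> X \<and> fclass X E (frep X E (fclass X E x)) = fclass X E x"
    unfolding frep_def by (rule someI[of _ x]) (simp add: assms(2))
  then show "frep X E (fclass X E x) \<in> X" "E (frep X E (fclass X E x)) x = top"
    using fclass_eq_iff[OF assms(1) _ assms(2)] by blast+
qed

lemma qrel_fclass:
  assumes "fuzzy_equivalence tens X E" "x \<in> X" "z \<in> X"
  shows "qrel tens X E V (fclass X E x) (fclass X E z) = rcomp tens X (rcomp tens X E V) E x z"
  unfolding qrel_def
proof (rule rcomp_cong)
  show "\<forall>u\<in>X. rcomp tens X E V (frep X E (fclass X E x)) u = rcomp tens X E V x u"
    using frep_fclass[OF assms(1,2)]
    by (auto intro!: rcomp_cong fuzzy_equivalence_top_left[OF assms(1)] assms(2))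
  show "\<forall>u\<in>X. E u (frep X E (fclass X E z)) = E u z"
    using frep_fclass[OF assms(1,3)] fuzzy_equivalence_top_right[OF assms(1)] assms(3) by blast
qed

lemma frel_quot_fclass:
  assumes E: "fuzzy_equivalence tens A E" and F: "fuzzy_equivalence tens A F"
    and le: "\<forall>x\<in>A. \<forall>y\<in>A. E x y \<le> F x y" and "a1 \<in> A" "a2 \<in> A"
  shows "frel_quot A E F (fclass A E a1) (fclass A E a2) = F a1 a2"
proof -
  let ?r1 = "frep A E (fclass A E a1)" and ?r2 = "frep A E (fclass A E a2)"
  have F_rep: "r \<in> A \<and> F r a = top" if "a \<in> A" "r = frep A E (fclass A E a)" for r a
    using frep_fclass[OF E \<open>a \<in> A\<close>] le that top_unique by metis
  have "F ?r1 ?r2 = F a1 ?r2"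
    using F_rep[of a1] F_rep[of a2] assms(4,5) fuzzy_equivalence_top_left[OF F] by blast
  also have "\<dots> = F a1 a2"
    using F_rep[of a2] assms(4,5) fuzzy_equivalence_top_right[OF F] by blast
  finally show ?thesis unfolding frel_quot_def .
qed

lemma fuzzy_equivalence_frel_quot:
  assumes "fuzzy_equivalence tens A E" "fuzzy_equivalence tens A F"
    and "\<forall>x\<in>A. \<forall>y\<in>A. E x y \<le> F x y"
  shows "fuzzy_equivalence tens (fquot A E) (frel_quot A E F)"
  using assms(2) frel_quot_fclass[OF assms]
  unfolding fuzzy_equivalence_def fquot_def by auto

lemma fclass_double_quotient_eq_iff:
  assumes E: "fuzzy_equivalence tens A E" and F: "fuzzy_equivalence tens A F"
    and le: "\<forall>x\<in>A. \<forall>y\<in>A. E x y \<le> F x y" and "a1 \<in> A" "a2 \<in> A"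
  shows "fclass (fquot A E) (frel_quot A E F) (fclass A E a1)
           = fclass (fquot A E) (frel_quot A E F) (fclass A E a2)
     \<longleftrightarrow> fclass A F a1 = fclass A F a2"
  using fclass_eq_iff[OF fuzzy_equivalence_frel_quot[OF E F le] fclass_fquot_in fclass_fquot_in]
    fclass_eq_iff[OF F] frel_quot_fclass[OF E F le] assms(4,5)
  by simp

lemma qrel_double_quotient_fclass:
  assumes E: "fuzzy_equivalence tens A E" and F: "fuzzy_equivalence tens A F"
    and le: "\<forall>x\<in>A. \<forall>y\<in>A. E x y \<le> F x y" and "a1 \<in> A" "a2 \<in> A"
  shows "qrel tens (fquot A E) (frel_quot A E F) (qrel tens A E V)
           (fclass (fquot A E) (frel_quot A E F) (fclass A E a1))
           (fclass (fquot A E) (frel_quot A E F) (fclass A E a2))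
       = qrel tens A F V (fclass A F a1) (fclass A F a2)"
proof -
  let ?Q = "fquot A E" and ?G = "frel_quot A E F"
  have G: "fuzzy_equivalence tens ?Q ?G"
    by (rule fuzzy_equivalence_frel_quot[OF E F le])
  have "qrel tens ?Q ?G (qrel tens A E V) (fclass ?Q ?G (fclass A E a1)) (fclass ?Q ?G (fclass A E a2))
      = rcomp tens ?Q (rcomp tens ?Q ?G (qrel tens A E V)) ?G (fclass A E a1) (fclass A E a2)"
    using qrel_fclass[OF G fclass_fquot_in fclass_fquot_in] assms(4,5) .
  also have "\<dots> = rcomp tens A (rcomp tens A F (rcomp tens A (rcomp tens A E V) E)) F a1 a2"
    using assms(4,5) frel_quot_fclass[OF E F le] qrel_fclass[OF E]
    by (intro rcomp_fquot ballI) simp_all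
  also have "\<dots> = rcomp tens A (rcomp tens A F V) F a1 a2"
    using assms(4,5) by (rule rcomp_sandwich_absorb[OF E F le])
  also have "\<dots> = qrel tens A F V (fclass A F a1) (fclass A F a2)"
    using qrel_fclass[OF F] assms(4,5) by simp
  finally show ?thesis .
qed

end

theorem theorem6p3:
  fixes tens res :: "'l::complete_lattice \<Rightarrow> 'l \<Rightarrow> 'l"
    and A :: "'a set" and I :: "'i set"
    and V :: "'i \<Rightarrow> 'a \<Rightarrow> 'a \<Rightarrow> 'l" and E F :: "'a \<Rightarrow> 'a \<Rightarrow> 'l"
  assumes "complete_residuated_lattice tens res"
    and "A \<noteq> {}" and "I \<noteq> {}"
    and "fuzzy_equivalence tens A E" and "fuzzy_equivalence tens A F"
    and "\<forall>x\<in>A. \<forall>y\<in>A. E x y \<le> F x y"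
  shows "(\<forall>a1\<in>A. \<forall>a2\<in>A. frel_quot A E F (fclass A E a1) (fclass A E a2) = F a1 a2)
    \<and> fuzzy_equivalence tens (fquot A E) (frel_quot A E F)
    \<and> frs_iso (fquot (fquot A E) (frel_quot A E F)) I
          (\<lambda>i. qrel tens (fquot A E) (frel_quot A E F) (qrel tens A E (V i)))
          (fquot A F) (\<lambda>i. qrel tens A F (V i))"
proof -
  interpret residuated_lattice_ops tens res by (rule residuated_lattice_ops.intro) fact
  note EF = assms(4-6)
  let ?p = "\<lambda>a. fclass (fquot A E) (frel_quot A E F) (fclass A E a)"
  have "frs_iso (?p ` A) I (\<lambda>i. qrel tens (fquot A E) (frel_quot A E F) (qrel tens A E (V i)))
      (fclass A F ` A) (\<lambda>i. qrel tens A F (V i))"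
    using fclass_double_quotient_eq_iff[OF EF] qrel_double_quotient_fclass[OF EF]
    by (intro frs_iso_image) auto
  moreover have "?p ` A = fquot (fquot A E) (frel_quot A E F)" "fclass A F ` A = fquot A F"
    unfolding fquot_def image_image by simp_all
  ultimately show ?thesis
    using frel_quot_fclass[OF EF] fuzzy_equivalence_frel_quot[OF EF] by simp
qed

end
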